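(* Let $(\mathcal{P},E,U_{E,\mathcal{P}},\mathrm{tok})$ be a system and $C$ a clustering function satisfying the standing properties with constant $\epsilon>0$. Let $\mathcal{A}$ be the set of players $Q$ with $|\mathrm{util}_Q(e,\mathrm{true})|\le\epsilon$ for all $e\in E$, let $\hat{\mathcal{P}}\subseteq\mathcal{A}$, and let $D\subset\mathcal{P}\setminus\hat{\mathcal{P}}$ be a set of delegates. Let $\mathrm{tok}'$ be a new token map in which the players of $\hat{\mathcal{P}}$ delegate all their tokens to $D$: $\mathrm{tok}'(Q)=0$ for $Q\in\hat{\mathcal{P}}$, $\mathrm{tok}'(d)\ge\mathrm{tok}(d)$ for $d\in D$ with $\mathrm{tok}'(D)=\mathrm{tok}(D)+\mathrm{tok}(\hat{\mathcal{P}})$, and $\mathrm{tok}'(Q)=\mathrm{tok}(Q)$ for all other $Q$; utilities are unchanged. If $\mathrm{tok}(\mathcal{A})\ge\mathrm{tok}'([d])$ for every $d\in D$ (where $[d]$ is the voting bloc of $d$), then $$\mathrm{VBE}_{C,\min}(E,\mathcal{P},U_{E,\mathcal{P}},\mathrm{tok}')\ \ge\ \mathrm{VBE}_{C,\min}(E,\mathcal{P},U_{E,\mathcal{P}},\mathrm{tok}).$$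
   Context: A system consists of a finite set of players $\mathcal{P}$, a token map $\mathrm{tok}:\mathcal{P}\to\mathbb{R}^+$ (extended to subsets by summation), binary elections $E=\{e_1,\dots,e_m\}$, and for each player utilities $\mathrm{util}_P(e,\mathrm{true})\in\mathbb{R}$ (with $\mathrm{util}_P(e,\mathrm{false})=-\mathrm{util}_P(e,\mathrm{true})$), forming the utility vector $U_{E,P}\in\mathbb{R}^m$. A clustering function $C$ is an equivalence relation $\sim_C$ on $\mathbb{R}^m$, partitioning players into voting blocs $\mathcal{P}/\!\sim_C$ via $P_i\sim_C P_j$ iff $U_{E,P_i}\sim_C U_{E,P_j}$; $[P]$ is the bloc of $P$. Standing properties of $C$: (i) there is a constant $\epsilon>0$ such that if $|\mathrm{util}_{P_i}(e,\mathrm{true})|\le\epsilon$ and $|\mathrm{util}_{P_j}(e,\mathrm{true})|\le\epsilon$ for all $e\in E$, then $P_i\sim_C P_j$; (ii) if $\mathrm{util}_{P_i}(e,\mathrm{true})$ and $\mathrm{util}_{P_j}(e,\mathrm{true})$ have the same sign for every $e\in E$, then $P_i\sim_C P_j$. $\mathrm{VBE}_{C,\min}(E,\mathcal{P},U_{E,\mathcal{P}},\mathrm{tok})=-\log_2\big(\max_{B\in\mathcal{P}/\sim_C}\mathrm{tok}(B)/\sum_{P\in\mathcal{P}}\mathrm{tok}(P)\big)$. *)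

theory Defs
  imports "HOL-Analysis.Analysis"
begin

text \<open>Elections are indexed by a finite type 'm, so a utility vector lives in real^'m
  (this is R^m with m = CARD('m)). U p $ e is util_p(e, true).
  A clustering function is an equivalence relation C on real^'m.\<close>

definition bloc_rel :: "'p set \<Rightarrow> ('p \<Rightarrow> real^'m) \<Rightarrow> (real^'m) rel \<Rightarrow> 'p rel" where
  "bloc_rel Pl U C = {(p, q). p \<in> Pl \<and> q \<in> Pl \<and> (U p, U q) \<in> C}"

definition blocs :: "'p set \<Rightarrow> ('p \<Rightarrow> real^'m) \<Rightarrow> (real^'m) rel \<Rightarrow> 'p set set" where
  "blocs Pl U C = Pl // bloc_rel Pl U C"

definition bloc_of :: "'p set \<Rightarrow> ('p \<Rightarrow> real^'m) \<Rightarrow> (real^'m) rel \<Rightarrow> 'p \<Rightarrow> 'p set" where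
  "bloc_of Pl U C p = bloc_rel Pl U C `` {p}"

definition VBE_min :: "(real^'m) rel \<Rightarrow> 'p set \<Rightarrow> ('p \<Rightarrow> real^'m) \<Rightarrow> ('p \<Rightarrow> real) \<Rightarrow> real" where
  "VBE_min C Pl U tok =
     - log 2 (Max ((\<lambda>B. sum tok B) ` blocs Pl U C) / sum tok Pl)"

definition clustering_standing :: "(real^'m) rel \<Rightarrow> real \<Rightarrow> 'p set \<Rightarrow> ('p \<Rightarrow> real^'m) \<Rightarrow> bool" where
  "clustering_standing C \<epsilon> Pl U \<longleftrightarrow>
     equiv UNIV C \<and> \<epsilon> > 0 \<and>
     (\<forall>p\<in>Pl. \<forall>q\<in>Pl. (\<forall>e. \<bar>U p $ e\<bar> \<le> \<epsilon>) \<and> (\<forall>e. \<bar>U q $ e\<bar> \<le> \<epsilon>) \<longrightarrow> (U p, U q) \<in> C) \<and>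
     (\<forall>p\<in>Pl. \<forall>q\<in>Pl. (\<forall>e. sgn (U p $ e) = sgn (U q $ e)) \<longrightarrow> (U p, U q) \<in> C)"

end

theory Submission
  imports Defs
begin

text \<open>Delegation conserves the total stake, so it suffices to compare the heaviest blocs.
  By the first standing property all players with utilities in [-\<epsilon>, \<epsilon>] lie in one bloc,
  so tok(A) is at most the old maximum. After delegation, a bloc containing a delegate d is
  [d] and weighs at most tok(A) by hypothesis; any other bloc only lost tokens. Hence the
  maximal bloc weight does not grow, and - log 2 is antitone.\<close>

lemma sum_redistributed_eq:
  fixes tok tok' :: "'p \<Rightarrow> 'a::comm_monoid_add"
  assumes "finite Pl" and "Z \<subseteq> Pl" and "D \<subseteq> Pl - Z"
    and "\<forall>Q\<in>Z. tok' Q = 0"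
    and "sum tok' D = sum tok D + sum tok Z"
    and "\<forall>Q\<in>Pl - Z - D. tok' Q = tok Q"
  shows "sum tok' Pl = sum tok Pl"
proof -
  have split: "sum f Pl = sum f Z + sum f D + sum f (Pl - Z - D)" for f :: "'p \<Rightarrow> 'a"
  proof -
    have "Z \<union> D \<subseteq> Pl" and "Z \<inter> D = {}" and "Pl - (Z \<union> D) = Pl - Z - D"
      using assms(2,3) by auto
    moreover have "finite Z" "finite D"
      using assms(1-3) by (auto intro: finite_subset)
    ultimately show ?thesis
      using sum.subset_diff[OF _ assms(1), of "Z \<union> D" f]
      by (simp add: sum.union_disjoint add_ac)
  qed
  show ?thesis
    using split[of tok'] split[of tok] assms(4-6) by (simp add: add_ac)
qed

lemma sum_le_after_zeroing:
  fixes tok tok' :: "'p \<Rightarrow> 'a::ordered_comm_monoid_add"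
  assumes "\<forall>p\<in>B. tok p \<ge> 0" and "\<forall>Q\<in>Z. tok' Q = 0" and "\<forall>Q\<in>B - Z. tok' Q = tok Q"
  shows "sum tok' B \<le> sum tok B"
proof (rule sum_mono)
  fix p assume "p \<in> B"
  then show "tok' p \<le> tok p"
    using assms by (cases "p \<in> Z") auto
qed

definition max_bloc_weight :: "(real^'m) rel \<Rightarrow> 'p set \<Rightarrow> ('p \<Rightarrow> real^'m) \<Rightarrow> ('p \<Rightarrow> real) \<Rightarrow> real" where
  "max_bloc_weight C Pl U tok = Max ((\<lambda>B. sum tok B) ` blocs Pl U C)"

lemma VBE_min_eq_max_bloc_weight:
  "VBE_min C Pl U tok = - log 2 (max_bloc_weight C Pl U tok / sum tok Pl)"
  by (simp add: VBE_min_def max_bloc_weight_def)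

lemma equiv_bloc_rel: "equiv UNIV C \<Longrightarrow> equiv Pl (bloc_rel Pl U C)"
  unfolding equiv_def refl_on_def sym_def trans_def bloc_rel_def by blast

lemma finite_blocs: "finite Pl \<Longrightarrow> finite (blocs Pl U C)"
  unfolding blocs_def bloc_rel_def by (rule finite_quotient) auto

lemma blocs_subset: "B \<in> blocs Pl U C \<Longrightarrow> B \<subseteq> Pl"
  unfolding blocs_def bloc_rel_def by (auto elim!: quotientE)

lemma bloc_of_in_blocs: "p \<in> Pl \<Longrightarrow> bloc_of Pl U C p \<in> blocs Pl U C"
  unfolding bloc_of_def blocs_def by (rule quotientI)

lemma mem_bloc_of: "equiv UNIV C \<Longrightarrow> p \<in> Pl \<Longrightarrow> p \<in> bloc_of Pl U C p"
  using equiv_bloc_rel unfolding bloc_of_def by (metis equiv_class_self)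

lemma blocs_eq_bloc_of:
  assumes "equiv UNIV C" and "B \<in> blocs Pl U C" and "d \<in> B"
  shows "B = bloc_of Pl U C d"
proof -
  obtain x where x: "B = bloc_rel Pl U C `` {x}"
    using assms(2) unfolding blocs_def by (auto elim: quotientE)
  with assms(3) have "(x, d) \<in> bloc_rel Pl U C"
    by blast
  then show ?thesis
    using x equiv_class_eq[OF equiv_bloc_rel[OF assms(1)]] unfolding bloc_of_def by simp
qed

lemma small_utility_players_subset_bloc_of:
  assumes "clustering_standing C \<epsilon> Pl U" and "a \<in> Pl" and "\<forall>e. \<bar>U a $ e\<bar> \<le> \<epsilon>"
  shows "{Q \<in> Pl. \<forall>e. \<bar>U Q $ e\<bar> \<le> \<epsilon>} \<subseteq> bloc_of Pl U C a"
  using assms unfolding clustering_standing_def bloc_of_def bloc_rel_def by auto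

lemma bloc_weight_le_max_bloc_weight:
  "finite Pl \<Longrightarrow> B \<in> blocs Pl U C \<Longrightarrow> sum tok B \<le> max_bloc_weight C Pl U tok"
  unfolding max_bloc_weight_def by (simp add: finite_blocs)

lemma max_bloc_weight_le:
  assumes "finite Pl" and "Pl \<noteq> {}" and "\<forall>B \<in> blocs Pl U C. sum tok B \<le> c"
  shows "max_bloc_weight C Pl U tok \<le> c"
proof -
  obtain p where "p \<in> Pl"
    using assms(2) by blast
  then have "blocs Pl U C \<noteq> {}"
    by (auto dest: bloc_of_in_blocs)
  then show ?thesis
    unfolding max_bloc_weight_def using assms(3) finite_blocs[OF assms(1), of U C] by simp
qed

lemma sum_le_max_bloc_weight:
  assumes "finite Pl" and "\<forall>p\<in>Pl. tok p \<ge> 0" and "S \<subseteq> B" and "B \<in> blocs Pl U C"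
  shows "sum tok S \<le> max_bloc_weight C Pl U tok"
proof -
  have "B \<subseteq> Pl"
    using assms(4) by (rule blocs_subset)
  then have "sum tok S \<le> sum tok B"
    using assms by (intro sum_mono2) (auto intro: finite_subset)
  also have "\<dots> \<le> max_bloc_weight C Pl U tok"
    using assms by (intro bloc_weight_le_max_bloc_weight)
  finally show ?thesis .
qed

lemma max_bloc_weight_pos:
  assumes "equiv UNIV C" and "finite Pl" and "\<forall>p\<in>Pl. tok p \<ge> 0" and "sum tok Pl > 0"
  shows "max_bloc_weight C Pl U tok > 0"
proof -
  obtain p where p: "p \<in> Pl" "tok p > 0"
    using assms(2,4) by (metis not_le sum_nonpos)
  have "sum tok {p} \<le> max_bloc_weight C Pl U tok"
    using assms(1-3) p(1) mem_bloc_of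
    by (intro sum_le_max_bloc_weight[where B = "bloc_of Pl U C p"] bloc_of_in_blocs) auto
  then show ?thesis
    using p(2) by simp
qed

lemma small_utility_weight_le_max_bloc_weight:
  assumes "clustering_standing C \<epsilon> Pl U" and "finite Pl" and "Pl \<noteq> {}"
    and "\<forall>p\<in>Pl. tok p \<ge> 0"
  shows "sum tok {Q \<in> Pl. \<forall>e. \<bar>U Q $ e\<bar> \<le> \<epsilon>} \<le> max_bloc_weight C Pl U tok"
proof (cases "\<exists>a \<in> Pl. \<forall>e. \<bar>U a $ e\<bar> \<le> \<epsilon>")
  case True
  then obtain a where a: "a \<in> Pl" "\<forall>e. \<bar>U a $ e\<bar> \<le> \<epsilon>" by blast
  show ?thesis
    using assms(2,4) small_utility_players_subset_bloc_of[OF assms(1) a] bloc_of_in_blocs[OF a(1), of U C]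
    by (rule sum_le_max_bloc_weight)
next
  case False
  then have no_small: "{Q \<in> Pl. \<forall>e. \<bar>U Q $ e\<bar> \<le> \<epsilon>} = {}"
    by blast
  obtain p where "p \<in> Pl"
    using assms(3) by blast
  then show ?thesis
    unfolding no_small using assms
    by (intro sum_le_max_bloc_weight[where B = "bloc_of Pl U C p"] bloc_of_in_blocs) auto
qed

lemma VBE_min_antimono:
  assumes "0 < max_bloc_weight C Pl U tok'"
    and "max_bloc_weight C Pl U tok' \<le> max_bloc_weight C Pl U tok"
    and "sum tok' Pl = sum tok Pl" and "0 < sum tok Pl"
  shows "VBE_min C Pl U tok \<le> VBE_min C Pl U tok'"
  using assms by (simp add: VBE_min_eq_max_bloc_weight divide_right_mono)

lemma max_bloc_weight_le_after_delegation:
  assumes "equiv UNIV C" and "finite Pl" and "Pl \<noteq> {}" and "\<forall>p\<in>Pl. tok p \<ge> 0"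
    and "\<forall>Q\<in>Phat. tok' Q = 0" and "\<forall>Q\<in>Pl - Phat - D. tok' Q = tok Q"
    and "\<forall>d\<in>D. sum tok' (bloc_of Pl U C d) \<le> max_bloc_weight C Pl U tok"
  shows "max_bloc_weight C Pl U tok' \<le> max_bloc_weight C Pl U tok"
proof (rule max_bloc_weight_le[OF assms(2,3)], intro ballI)
  fix B assume B: "B \<in> blocs Pl U C"
  show "sum tok' B \<le> max_bloc_weight C Pl U tok"
  proof (cases "B \<inter> D = {}")
    case True
    have "B \<subseteq> Pl"
      using B by (rule blocs_subset)
    then have "sum tok' B \<le> sum tok B"
      using True assms(4-6) by (intro sum_le_after_zeroing[where Z = Phat]) auto
    then show ?thesis
      using bloc_weight_le_max_bloc_weight[OF assms(2) B, of tok] by linarith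
  next
    case False
    then obtain d where d: "d \<in> B" "d \<in> D" by blast
    have "B = bloc_of Pl U C d"
      using assms(1) B d(1) by (rule blocs_eq_bloc_of)
    then show ?thesis
      using assms(7) d(2) by simp
  qed
qed

theorem theorem4:
  fixes Pl :: "'p set" and U :: "'p \<Rightarrow> real^'m" and tok tok' :: "'p \<Rightarrow> real"
    and C :: "(real^'m) rel" and \<epsilon> :: real and A Phat D :: "'p set"
  assumes fin: "finite Pl"
    and pos: "\<forall>p\<in>Pl. tok p > 0"
    and standing: "clustering_standing C \<epsilon> Pl U"
    and A_def: "A = {Q \<in> Pl. \<forall>e. \<bar>U Q $ e\<bar> \<le> \<epsilon>}"
    and Phat_sub: "Phat \<subseteq> A"
    and D_sub: "D \<subseteq> Pl - Phat"
    and Phat_zero: "\<forall>Q\<in>Phat. tok' Q = 0"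
    and D_ge: "\<forall>d\<in>D. tok' d \<ge> tok d"
    and D_total: "sum tok' D = sum tok D + sum tok Phat"
    and others_unchanged: "\<forall>Q\<in>Pl - Phat - D. tok' Q = tok Q"
    and delegate_bloc_le: "\<forall>d\<in>D. sum tok A \<ge> sum tok' (bloc_of Pl U C d)"
  shows "VBE_min C Pl U tok' \<ge> VBE_min C Pl U tok"
proof (cases "Pl = {}")
  case True
  then show ?thesis by (simp add: VBE_min_def)
next
  case False
  have eqv: "equiv UNIV C"
    using standing by (simp add: clustering_standing_def)
  have nonneg: "\<forall>p\<in>Pl. tok p \<ge> 0"
    using pos by auto
  have nonneg': "\<forall>p\<in>Pl. tok' p \<ge> 0"
    using pos Phat_zero D_ge others_unchanged by (metis DiffI less_eq_real_def order_trans)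
  have total: "sum tok' Pl = sum tok Pl"
    using Phat_sub A_def by (intro sum_redistributed_eq[OF fin _ D_sub Phat_zero D_total others_unchanged]) auto
  have total_pos: "0 < sum tok Pl"
    using pos False fin by (simp add: sum_pos)
  have "sum tok A \<le> max_bloc_weight C Pl U tok"
    unfolding A_def by (rule small_utility_weight_le_max_bloc_weight[OF standing fin False nonneg])
  then have "max_bloc_weight C Pl U tok' \<le> max_bloc_weight C Pl U tok"
    using delegate_bloc_le
    by (intro max_bloc_weight_le_after_delegation[OF eqv fin False nonneg Phat_zero others_unchanged]) force
  moreover have "0 < max_bloc_weight C Pl U tok'"
    using eqv fin nonneg' total total_pos by (intro max_bloc_weight_pos) auto
  ultimately show ?thesis
    using total total_pos by (intro VBE_min_antimono)
qed

end
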